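(* Let $S$ be a semigroup and $a\in S$ an idempotent such that every element of $\{a\}\cup aSa$ has exactly one inverse in $S$. Then $\operatorname{Reg}(Sa)=P=aSa$, where $P=\{x\in Sa: x\,\mathscr L\,ax\}$, and this is an inverse monoid.
   Context: An inverse of $x\in S$ is $y\in S$ with $x=xyx$ and $y=yxy$. $\operatorname{Reg}(Sa)$ is the set of regular elements of the semigroup $Sa=\{xa:x\in S\}$; $aSa=\{axa:x\in S\}$. $\mathscr L$ is Green's $\mathscr L$-relation on $S$. A semigroup is inverse if every element has exactly one inverse in it. *)

theory Defs
  imports Main
begin

text \<open>The semigroup S is the whole carrier of a type of class semigroup_mult.\<close>

definition is_inverse :: "'a::semigroup_mult \<Rightarrow> 'a \<Rightarrow> bool" where
  "is_inverse x y \<longleftrightarrow> x = x * y * x \<and> y = y * x * y"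

definition left_ideal1 :: "'a::semigroup_mult \<Rightarrow> 'a set" where
  "left_ideal1 x = insert x {u * x | u. True}"

definition greenL :: "'a::semigroup_mult \<Rightarrow> 'a \<Rightarrow> bool" where
  "greenL x y \<longleftrightarrow> left_ideal1 x = left_ideal1 y"

definition left_mult_set :: "'a::semigroup_mult \<Rightarrow> 'a set" where
  "left_mult_set a = {x * a | x. True}"

definition sandwich_set :: "'a::semigroup_mult \<Rightarrow> 'a set" where
  "sandwich_set a = {a * x * a | x. True}"

definition Reg :: "'a::semigroup_mult set \<Rightarrow> 'a set" where
  "Reg T = {x \<in> T. \<exists>y\<in>T. x = x * y * x}"

definition inverse_monoid_on :: "'a::semigroup_mult set \<Rightarrow> bool" where
  "inverse_monoid_on T \<longleftrightarrow>
     (\<forall>x\<in>T. \<forall>y\<in>T. x * y \<in> T) \<and>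
     (\<exists>e\<in>T. \<forall>x\<in>T. e * x = x \<and> x * e = x) \<and>
     (\<forall>x\<in>T. \<exists>!y. y \<in> T \<and> is_inverse x y)"

end

theory Submission
  imports Defs
begin

text \<open>The heart of the proof is that an element \<open>x \<in> Sa\<close> with \<open>x \<in> S\<^sup>1ax\<close> already lies in
  \<open>aSa\<close>: choosing an inverse \<open>y\<close> of \<open>b = ax\<close> inside \<open>aSa\<close>, the element \<open>f = xy\<close> is an
  idempotent with \<open>fa = f\<close>, so \<open>af \<in> aSa\<close> has both \<open>af\<close> and \<open>f\<close> as inverses; uniqueness
  forces \<open>af = f\<close>, whence \<open>ax = afb = fb = x\<close>. Both regularity in \<open>Sa\<close> and
  \<open>x \<L> ax\<close> give \<open>x \<in> S\<^sup>1ax\<close>, and conversely every element of \<open>aSa\<close> has its unique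
  inverse in \<open>aSa\<close>.\<close>

lemma is_inverse_idempotent: "e * e = e \<Longrightarrow> is_inverse e e"
  unfolding is_inverse_def by simp

lemma is_inverse_absorbing_idempotent:
  assumes "f * f = f" "f * a = f"
  shows "is_inverse (a * f) f"
  unfolding is_inverse_def using assms by (metis mult.assoc)

lemma left_mult_set_iff:
  assumes "a * a = a"
  shows "x \<in> left_mult_set a \<longleftrightarrow> x * a = x"
  using assms unfolding left_mult_set_def by (auto simp: mult.assoc) (metis)

lemma sandwich_set_iff:
  assumes "a * a = a"
  shows "x \<in> sandwich_set a \<longleftrightarrow> a * x = x \<and> x * a = x"
proof
  assume "x \<in> sandwich_set a"
  then obtain s where "x = a * s * a" unfolding sandwich_set_def by blast
  with assms show "a * x = x \<and> x * a = x" by (metis mult.assoc)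
next
  assume "a * x = x \<and> x * a = x"
  then have "x = a * x * a" by simp
  then show "x \<in> sandwich_set a" unfolding sandwich_set_def by blast
qed

lemma sandwich_set_subset_left_mult_set: "sandwich_set a \<subseteq> left_mult_set a"
  unfolding sandwich_set_def left_mult_set_def by blast

lemma mult_mem_sandwich_set:
  "x \<in> sandwich_set a \<Longrightarrow> y \<in> sandwich_set a \<Longrightarrow> x * y \<in> sandwich_set a"
  unfolding sandwich_set_def by (auto simp: mult.assoc) (metis mult.assoc)

lemma left_ideal1_mult_regular:
  assumes "x \<in> left_ideal1 b" "b * y * b = b"
  shows "x * y * b = x"
  using assms unfolding left_ideal1_def by (auto simp: mult.assoc)

lemma unique_inverse_mem_sandwich_set:
  assumes idem: "a * a = a" and x: "x \<in> sandwich_set a"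
    and uniq: "\<exists>!y. is_inverse x y" and y: "is_inverse x y"
  shows "y \<in> sandwich_set a"
proof -
  have ax: "a * x = x" and xa: "x * a = x" using x idem by (auto simp: sandwich_set_iff)
  have "is_inverse x (a * y * a)"
    using y unfolding is_inverse_def by (metis ax xa mult.assoc)
  with uniq y have "y = a * y * a" by blast
  then show ?thesis unfolding sandwich_set_def by blast
qed

context
  fixes a :: "'a::semigroup_mult"
  assumes idem: "a * a = a"
    and uniq: "\<forall>x \<in> sandwich_set a. \<exists>!y. is_inverse x y"
begin

lemma idempotent_left_absorbed:
  assumes "f * f = f" "f * a = f"
  shows "a * f = f"
proof -
  have "a * f \<in> sandwich_set a"
    using assms idem by (simp add: sandwich_set_iff) (metis mult.assoc)
  moreover have "is_inverse (a * f) (a * f)"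
    using assms by (intro is_inverse_idempotent) (metis mult.assoc)
  ultimately show ?thesis
    using uniq is_inverse_absorbing_idempotent[OF assms] by blast
qed

lemma mem_sandwich_set_if_left_ideal1:
  assumes xa: "x * a = x" and xL: "x \<in> left_ideal1 (a * x)"
  shows "x \<in> sandwich_set a"
proof -
  define b where "b = a * x"
  have b: "b \<in> sandwich_set a"
    unfolding b_def using idem xa by (simp add: sandwich_set_iff) (metis mult.assoc)
  obtain y where y: "is_inverse b y" using uniq b by blast
  have ya: "y * a = y"
    using unique_inverse_mem_sandwich_set[OF idem b _ y] uniq b idem
    by (simp add: sandwich_set_iff)
  have xyb: "x * y * b = x"
    using left_ideal1_mult_regular xL y unfolding b_def is_inverse_def by metis
  define f where "f = x * y"
  have "f * f = f" "f * a = f"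
    using xyb ya unfolding f_def b_def by (metis mult.assoc)+
  then have "a * f = f" by (rule idempotent_left_absorbed)
  then have "a * x = x"
    using xyb unfolding f_def b_def by (metis mult.assoc)
  with xa idem show ?thesis by (simp add: sandwich_set_iff)
qed

lemma Reg_left_mult_set_eq_sandwich_set: "Reg (left_mult_set a) = sandwich_set a"
proof
  show "Reg (left_mult_set a) \<subseteq> sandwich_set a"
  proof
    fix x assume "x \<in> Reg (left_mult_set a)"
    then obtain t where x: "x \<in> left_mult_set a" and "x = x * (t * a) * x"
      unfolding Reg_def left_mult_set_def by blast
    then have "x = (x * t) * (a * x)" by (simp add: mult.assoc)
    then have "x \<in> left_ideal1 (a * x)" unfolding left_ideal1_def by blast
    with x show "x \<in> sandwich_set a"
      using mem_sandwich_set_if_left_ideal1 idem by (simp add: left_mult_set_iff)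
  qed
next
  show "sandwich_set a \<subseteq> Reg (left_mult_set a)"
  proof
    fix x assume x: "x \<in> sandwich_set a"
    then obtain y where y: "is_inverse x y" using uniq by blast
    then have "y \<in> sandwich_set a"
      using unique_inverse_mem_sandwich_set[OF idem x] uniq x by blast
    with x y show "x \<in> Reg (left_mult_set a)"
      using sandwich_set_subset_left_mult_set unfolding Reg_def is_inverse_def by blast
  qed
qed

lemma L_related_left_mult_set_eq_sandwich_set:
  "{x \<in> left_mult_set a. greenL x (a * x)} = sandwich_set a"
proof (intro equalityI subsetI)
  fix x assume "x \<in> {x \<in> left_mult_set a. greenL x (a * x)}"
  then have "x * a = x" and "left_ideal1 x = left_ideal1 (a * x)"
    using idem unfolding greenL_def by (auto simp: left_mult_set_iff)
  moreover have "x \<in> left_ideal1 x" unfolding left_ideal1_def by simp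
  ultimately show "x \<in> sandwich_set a" using mem_sandwich_set_if_left_ideal1 by simp
next
  fix x assume "x \<in> sandwich_set a"
  then show "x \<in> {x \<in> left_mult_set a. greenL x (a * x)}"
    using idem unfolding greenL_def by (auto simp: sandwich_set_iff left_mult_set_iff)
qed

lemma inverse_monoid_on_sandwich_set: "inverse_monoid_on (sandwich_set a)"
  unfolding inverse_monoid_on_def
proof (intro conjI ballI)
  show "x * y \<in> sandwich_set a" if "x \<in> sandwich_set a" "y \<in> sandwich_set a" for x y
    using that by (rule mult_mem_sandwich_set)
  show "\<exists>e\<in>sandwich_set a. \<forall>x\<in>sandwich_set a. e * x = x \<and> x * e = x"
    using idem by (intro bexI[of _ a]) (auto simp: sandwich_set_iff)
  show "\<exists>!y. y \<in> sandwich_set a \<and> is_inverse x y" if x: "x \<in> sandwich_set a" for x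
    using uniq x unique_inverse_mem_sandwich_set[OF idem x] by blast
qed

end

theorem theorem3p33:
  fixes a :: "'a::semigroup_mult"
  assumes idem: "a * a = a"
    and uniq: "\<forall>x \<in> insert a (sandwich_set a). \<exists>!y. is_inverse x y"
  defines "P \<equiv> {x \<in> left_mult_set a. greenL x (a * x)}"
  shows "Reg (left_mult_set a) = P \<and> P = sandwich_set a \<and> inverse_monoid_on (sandwich_set a)"
proof -
  have "\<forall>x \<in> sandwich_set a. \<exists>!y. is_inverse x y" using uniq by blast
  then show ?thesis
    unfolding P_def
    using Reg_left_mult_set_eq_sandwich_set[OF idem] L_related_left_mult_set_eq_sandwich_set[OF idem]
      inverse_monoid_on_sandwich_set[OF idem]
    by simp
qed

end
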